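(* Let $\mathcal{C}$ be a simplicial complex on $[n]$, with $\mathcal{A}_{\mathcal{C}}$ indexed by $\{0,1\}$-vectors. Then the set \[K=\Big\{\sum_{\mathbf{j}\in\{0,1\}^S}(-1)^{\|\mathbf{j}\|_1}e_{\mathbf{i},\mathbf{j}} : S \text{ a minimal non-face of } \mathcal{C},\ \mathbf{i}\in\{0,1\}^{[n]\setminus S}\Big\}\] spans $\ker(\mathcal{A}_{\mathcal{C}})$. Furthermore, if $M'$ is the matrix whose columns are the elements of $K$, then multiplying a suitable set of rows and columns of $M'$ by $-1$ yields the matrix $M$ whose columns are the vectors $\sum_{\mathbf{j}\in\{0,1\}^S}e_{\mathbf{i},\mathbf{j}}$, for $S$ a minimal non-face of $\mathcal{C}$ and $\mathbf{i}\in\{0,1\}^{[n]\setminus S}$ (with columns indexed in the same way).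
   Context: A simplicial complex on $[n]$ is a family of subsets of $[n]$ closed under subsets; facets are inclusion-maximal faces; a minimal non-face is a subset of $[n]$ not in $\mathcal{C}$ all of whose proper subsets are in $\mathcal{C}$. Here $\mathcal{A}_{\mathcal{C}}$ is the $0/1$ matrix with columns indexed by $\mathbf{k}\in\{0,1\}^n$ and rows indexed by pairs $(F,\mathbf{e})$, $F$ a facet, $\mathbf{e}\in\{0,1\}^F$, with entry $1$ iff $\mathbf{e}=\mathbf{k}|_F$. For $S\subseteq[n]$, $\mathbf{j}\in\{0,1\}^S$ and $\mathbf{i}\in\{0,1\}^{[n]\setminus S}$, $e_{\mathbf{i},\mathbf{j}}\in\mathbb{R}^{\{0,1\}^n}$ is the standard basis vector at the index $\mathbf{k}$ with $\mathbf{k}|_S=\mathbf{j}$ and $\mathbf{k}|_{[n]\setminus S}=\mathbf{i}$. $\|\mathbf{j}\|_1$ is the number of ones in $\mathbf{j}$. *)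

theory Defs
  imports Complex_Main
begin

text \<open>Vertex set [n] is rendered as {..<n}. A simplicial complex is a family of
  subsets of [n] closed under taking subsets.\<close>

definition simplicial_complex :: "nat \<Rightarrow> nat set set \<Rightarrow> bool" where
  "simplicial_complex n C \<longleftrightarrow> (\<forall>F\<in>C. F \<subseteq> {..<n}) \<and> (\<forall>F\<in>C. \<forall>G. G \<subseteq> F \<longrightarrow> G \<in> C)"

definition facets :: "nat set set \<Rightarrow> nat set set" where
  "facets C = {F \<in> C. \<forall>G\<in>C. F \<subseteq> G \<longrightarrow> G = F}"

definition min_nonfaces :: "nat \<Rightarrow> nat set set \<Rightarrow> nat set set" where
  "min_nonfaces n C = {S. S \<subseteq> {..<n} \<and> S \<notin> C \<and> (\<forall>T. T \<subset> S \<longrightarrow> T \<in> C)}"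

definition binvecs :: "nat set \<Rightarrow> (nat \<Rightarrow> nat) set" where
  "binvecs A = {k. (\<forall>t\<in>A. k t \<in> {0,1}) \<and> (\<forall>t. t \<notin> A \<longrightarrow> k t = 0)}"

definition restr :: "(nat \<Rightarrow> nat) \<Rightarrow> nat set \<Rightarrow> (nat \<Rightarrow> nat)" where
  "restr k F = (\<lambda>t. if t \<in> F then k t else 0)"

text \<open>The matrix A_C: rows (F,e), F a facet, e in {0,1}^F; columns k in {0,1}^n.\<close>

definition AC_rows :: "nat set set \<Rightarrow> (nat set \<times> (nat \<Rightarrow> nat)) set" where
  "AC_rows C = {(F, e). F \<in> facets C \<and> e \<in> binvecs F}"

definition AC_cols :: "nat \<Rightarrow> (nat \<Rightarrow> nat) set" where
  "AC_cols n = binvecs {..<n}"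

definition AC :: "nat set \<times> (nat \<Rightarrow> nat) \<Rightarrow> (nat \<Rightarrow> nat) \<Rightarrow> real" where
  "AC r k = (if snd r = restr k (fst r) then 1 else 0)"

text \<open>Vectors in R^({0,1}^n) are functions on 0/1 vectors vanishing outside {0,1}^n.\<close>

definition AC_kernel :: "nat \<Rightarrow> nat set set \<Rightarrow> ((nat \<Rightarrow> nat) \<Rightarrow> real) set" where
  "AC_kernel n C = {x. (\<forall>k. k \<notin> AC_cols n \<longrightarrow> x k = 0) \<and>
      (\<forall>r\<in>AC_rows C. (\<Sum>k\<in>AC_cols n. AC r k * x k) = 0)}"

text \<open>The index k with k|_S = j and k|_([n]-S) = i.\<close>

definition glue :: "nat set \<Rightarrow> (nat \<Rightarrow> nat) \<Rightarrow> (nat \<Rightarrow> nat) \<Rightarrow> (nat \<Rightarrow> nat)" where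
  "glue S i j = (\<lambda>t. if t \<in> S then j t else i t)"

definition unitvec :: "nat set \<Rightarrow> (nat \<Rightarrow> nat) \<Rightarrow> (nat \<Rightarrow> nat) \<Rightarrow> (nat \<Rightarrow> nat) \<Rightarrow> real" where
  "unitvec S i j = (\<lambda>k. if k = glue S i j then 1 else 0)"

definition norm1 :: "nat set \<Rightarrow> (nat \<Rightarrow> nat) \<Rightarrow> nat" where
  "norm1 S j = (\<Sum>t\<in>S. j t)"

definition col_idx :: "nat \<Rightarrow> nat set set \<Rightarrow> (nat set \<times> (nat \<Rightarrow> nat)) set" where
  "col_idx n C = {(S, i). S \<in> min_nonfaces n C \<and> i \<in> binvecs ({..<n} - S)}"

definition Kvec :: "nat set \<times> (nat \<Rightarrow> nat) \<Rightarrow> (nat \<Rightarrow> nat) \<Rightarrow> real" where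
  "Kvec p = (\<lambda>k. \<Sum>j\<in>binvecs (fst p). (-1) ^ norm1 (fst p) j * unitvec (fst p) (snd p) j k)"

definition Mvec :: "nat set \<times> (nat \<Rightarrow> nat) \<Rightarrow> (nat \<Rightarrow> nat) \<Rightarrow> real" where
  "Mvec p = (\<lambda>k. \<Sum>j\<in>binvecs (fst p). unitvec (fst p) (snd p) j k)"

definition Kset :: "nat \<Rightarrow> nat set set \<Rightarrow> ((nat \<Rightarrow> nat) \<Rightarrow> real) set" where
  "Kset n C = Kvec ` col_idx n C"

definition lin_span :: "('a \<Rightarrow> real) set \<Rightarrow> ('a \<Rightarrow> real) set" where
  "lin_span V = {x. \<exists>W c. finite W \<and> W \<subseteq> V \<and> x = (\<lambda>k. \<Sum>v\<in>W. c v * v k)}"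

end

theory Submission
  imports Defs "HOL-Library.Indicator_Function"
begin

text \<open>
  Identify a 0/1 vector with its support. The element of \<open>K\<close> indexed by \<open>(S, i)\<close> is then the
  signed cube \<open>\<Sum>W\<subseteq>S. (-1)^|W| e(W \<union> B)\<close>, where \<open>B\<close> is the support of \<open>i\<close>. Row \<open>(F, e)\<close> of
  \<open>A_C\<close> annihilates it: the non-face \<open>S\<close> is not contained in the facet \<open>F\<close>, and toggling a vertex
  of \<open>S - F\<close> pairs off terms of opposite sign. Conversely, a signed cube over any non-face \<open>T\<close> is a
  signed sum of cubes over a minimal non-face \<open>S \<subseteq> T\<close>, and Moebius inversion on the subset
  lattice writes every \<open>x\<close> as \<open>\<Sum>T. (-1)^|T| g(T) \<cdot> cube(T)\<close>, where \<open>g(T)\<close> sums \<open>x\<close> over the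
  supersets of \<open>T\<close>. If \<open>T\<close> is a face, \<open>g(T)\<close> is a sum of row sums of a facet containing \<open>T\<close>,
  hence vanishes on the kernel. For the signs, take \<open>\<rho> k = (-1)^|k|\<close> and \<open>\<gamma> (S, i) = (-1)^|i|\<close>:
  on the support of a cube \<open>|k| = |i| + |j|\<close>.
\<close>

lemma sum_Pow_Un_disjoint:
  assumes "finite A" "finite B" "A \<inter> B = {}"
  shows "(\<Sum>W\<in>Pow (A \<union> B). f W) = (\<Sum>X\<in>Pow A. \<Sum>Y\<in>Pow B. f (X \<union> Y))"
proof -
  have "(\<Sum>W\<in>Pow (A \<union> B). f W) = (\<Sum>(X, Y)\<in>Pow A \<times> Pow B. f (X \<union> Y))"
    using assms(3)
    by (intro sum.reindex_bij_witness[where i = "\<lambda>(X, Y). X \<union> Y" and j = "\<lambda>W. (W \<inter> A, W \<inter> B)"])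
      (auto simp flip: Int_Un_distrib simp: Int_absorb2)
  then show ?thesis
    by (simp add: sum.cartesian_product)
qed

lemma sum_Pow_alternating_eq_0:
  fixes g :: "'a set \<Rightarrow> 'b::comm_ring_1"
  assumes "finite S" "a \<in> S" "\<And>W. W \<subseteq> S - {a} \<Longrightarrow> g (insert a W) = g W"
  shows "(\<Sum>W\<in>Pow S. (-1) ^ card W * g W) = 0"
proof -
  have S: "S = (S - {a}) \<union> {a}"
    using assms(2) by blast
  have "(\<Sum>W\<in>Pow S. (-1) ^ card W * g W)
      = (\<Sum>X\<in>Pow (S - {a}). \<Sum>Y\<in>Pow {a}. (-1) ^ card (X \<union> Y) * g (X \<union> Y))"
    using assms(1) by (subst S, intro sum_Pow_Un_disjoint) auto
  also have "\<dots> = 0"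
  proof -
    have "(-1) ^ card (insert a X) * g (insert a X) = - ((-1) ^ card X * g X)"
      if X: "X \<subseteq> S - {a}" for X
    proof -
      have "finite X" "a \<notin> X"
        using X assms(1) finite_subset by auto
      then show ?thesis
        using X assms(3) by simp
    qed
    then show ?thesis
      by (intro sum.neutral) (auto simp: Pow_insert)
  qed
  finally show ?thesis .
qed

lemma sum_subsupersets_sign:
  assumes "finite Q"
  shows "(\<Sum>T | T \<subseteq> Q \<and> P \<subseteq> T. (-1::'b::ring_1) ^ card T) = (if P = Q then (-1) ^ card Q else 0)"
proof (cases "P \<subset> Q")
  case True
  have "(\<Sum>T | T \<subseteq> Q \<and> P \<subseteq> T. (-1::'b) ^ card T) = 0"
  proof (rule sum_alternating_cancels)
    show "finite {T. T \<subseteq> Q \<and> P \<subseteq> T}"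
      using assms by simp
    show "card {T \<in> {T. T \<subseteq> Q \<and> P \<subseteq> T}. even (card T)}
        = card {T \<in> {T. T \<subseteq> Q \<and> P \<subseteq> T}. odd (card T)}"
      using card_subsupersets_even_odd[OF assms True] by (simp add: conj_assoc)
  qed
  then show ?thesis
    using True by auto
next
  case False
  then have "{T. T \<subseteq> Q \<and> P \<subseteq> T} = (if P = Q then {Q} else {})"
    by auto
  then show ?thesis
    by simp
qed

lemma superset_sum_inversion:
  fixes f :: "'a set \<Rightarrow> 'b::comm_ring_1"
  assumes "finite U" "P \<subseteq> U"
  shows "(\<Sum>T\<in>Pow U. (-1) ^ card T * (\<Sum>Q\<in>Pow U. if T \<subseteq> Q then f Q else 0)
           * (if P \<subseteq> T then (-1) ^ card P else 0)) = f P"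
proof -
  have "(\<Sum>T\<in>Pow U. (-1) ^ card T * (\<Sum>Q\<in>Pow U. if T \<subseteq> Q then f Q else 0)
           * (if P \<subseteq> T then (-1) ^ card P else 0))
      = (\<Sum>T\<in>Pow U. \<Sum>Q\<in>Pow U. if T \<subseteq> Q \<and> P \<subseteq> T then (-1) ^ card T * ((-1) ^ card P * f Q) else 0)"
    by (intro sum.cong refl) (auto simp: sum_distrib_left sum_distrib_right intro!: sum.cong)
  also have "\<dots> = (\<Sum>Q\<in>Pow U. \<Sum>T | T \<subseteq> Q \<and> P \<subseteq> T. (-1) ^ card T * ((-1) ^ card P * f Q))"
  proof (subst sum.swap, rule sum.cong[OF refl])
    fix Q assume "Q \<in> Pow U"
    then have "{T \<in> Pow U. T \<subseteq> Q \<and> P \<subseteq> T} = {T. T \<subseteq> Q \<and> P \<subseteq> T}"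
      by auto
    then show "(\<Sum>T\<in>Pow U. if T \<subseteq> Q \<and> P \<subseteq> T then (-1) ^ card T * ((-1) ^ card P * f Q) else 0)
        = (\<Sum>T | T \<subseteq> Q \<and> P \<subseteq> T. (-1) ^ card T * ((-1) ^ card P * f Q))"
      using assms(1) by (simp add: sum.inter_filter[symmetric])
  qed
  also have "\<dots> = (\<Sum>Q\<in>Pow U. if Q = P then f Q else 0)"
    using assms(1)
    by (intro sum.cong refl) (auto simp: sum_subsupersets_sign finite_subset simp flip: sum_distrib_right)
  also have "\<dots> = f P"
    using assms by simp
  finally show ?thesis .
qed

lemma indicator_inject: "(indicator A :: 'a \<Rightarrow> 'b::zero_neq_one) = indicator B \<longleftrightarrow> A = B"
  by (metis indicator_eq_1_iff subsetI subset_antisym)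

lemma binvecs_eq_indicator_image: "binvecs A = indicator ` Pow A"
proof
  show "binvecs A \<subseteq> indicator ` Pow A"
  proof
    fix k assume "k \<in> binvecs A"
    then have "k = indicator {t \<in> A. k t = 1}"
      unfolding binvecs_def indicator_def by (intro ext) auto
    then show "k \<in> indicator ` Pow A"
      by blast
  qed
  show "indicator ` Pow A \<subseteq> binvecs A"
    unfolding binvecs_def by (auto simp: indicator_def)
qed

lemma sum_binvecs: "sum f (binvecs A) = (\<Sum>W\<in>Pow A. f (indicator W))"
  by (simp add: binvecs_eq_indicator_image sum.reindex inj_on_def indicator_inject)

lemma norm1_indicator: "finite S \<Longrightarrow> W \<subseteq> S \<Longrightarrow> norm1 S (indicator W) = card W"
  by (simp add: norm1_def sum_indicator_eq_card Int_absorb1)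

lemma glue_indicator:
  "W \<subseteq> S \<Longrightarrow> B \<inter> S = {} \<Longrightarrow> glue S (indicator B) (indicator W) = indicator (W \<union> B)"
  by (rule ext) (auto simp: glue_def indicator_def)

lemma AC_indicator: "AC (F, indicator R) (indicator Q) = of_bool (Q \<inter> F = R)"
proof -
  have "restr (indicator Q) F = indicator (Q \<inter> F)"
    unfolding restr_def indicator_def by auto
  then show ?thesis
    unfolding AC_def by (auto simp: indicator_inject)
qed

definition signed_cube :: "nat set \<Rightarrow> nat set \<Rightarrow> (nat \<Rightarrow> nat) \<Rightarrow> real" where
  "signed_cube S B k = (\<Sum>W\<in>Pow S. if k = indicator (W \<union> B) then (-1) ^ card W else 0)"

lemma Kvec_eq_signed_cube:
  assumes "finite S" "B \<inter> S = {}"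
  shows "Kvec (S, indicator B) = signed_cube S B"
proof
  fix k
  have "(-1) ^ norm1 S (indicator W) * unitvec S (indicator B) (indicator W) k
      = (if k = indicator (W \<union> B) then (-1) ^ card W else 0)" if "W \<subseteq> S" for W
    using that assms by (simp add: unitvec_def norm1_indicator glue_indicator)
  then show "Kvec (S, indicator B) k = signed_cube S B k"
    unfolding Kvec_def signed_cube_def by (simp add: sum_binvecs)
qed

lemma signed_cube_Un:
  assumes "finite S" "finite D" "S \<inter> D = {}"
  shows "signed_cube (S \<union> D) B k = (\<Sum>E\<in>Pow D. (-1) ^ card E * signed_cube S (E \<union> B) k)"
proof -
  have "signed_cube (S \<union> D) B k
      = (\<Sum>W\<in>Pow S. \<Sum>E\<in>Pow D. if k = indicator (W \<union> E \<union> B) then (-1) ^ card (W \<union> E) else 0)"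
    unfolding signed_cube_def using assms by (rule sum_Pow_Un_disjoint)
  also have "\<dots> = (\<Sum>E\<in>Pow D. \<Sum>W\<in>Pow S.
      (-1) ^ card E * (if k = indicator (W \<union> (E \<union> B)) then (-1) ^ card W else 0))"
  proof (subst sum.swap, intro sum.cong refl)
    fix E W assume "E \<in> Pow D" "W \<in> Pow S"
    then have "card (W \<union> E) = card W + card E"
      using assms by (intro card_Un_disjoint) (auto intro: finite_subset)
    then show "(if k = indicator (W \<union> E \<union> B) then (-1::real) ^ card (W \<union> E) else 0)
        = (-1) ^ card E * (if k = indicator (W \<union> (E \<union> B)) then (-1) ^ card W else 0)"
      by (simp add: power_add Un_assoc)
  qed
  finally show ?thesis
    by (simp add: signed_cube_def sum_distrib_left)
qed

lemma signed_cube_indicator: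
  "finite T \<Longrightarrow> signed_cube T {} (indicator P) = (if P \<subseteq> T then (-1) ^ card P else 0)"
  unfolding signed_cube_def by (simp add: indicator_inject sum.delta')

lemma signed_cube_eq_0:
  "S \<union> B \<subseteq> {..<n} \<Longrightarrow> k \<notin> AC_cols n \<Longrightarrow> signed_cube S B k = 0"
  unfolding signed_cube_def AC_cols_def binvecs_eq_indicator_image by (intro sum.neutral) auto

lemma sum_AC_cols_signed_cube:
  assumes "S \<union> B \<subseteq> {..<n}"
  shows "(\<Sum>k\<in>AC_cols n. y k * signed_cube S B k)
    = (\<Sum>W\<in>Pow S. (-1) ^ card W * y (indicator (W \<union> B)))"
proof -
  have "(\<Sum>k\<in>AC_cols n. y k * signed_cube S B k)
      = (\<Sum>Q\<in>Pow {..<n}. \<Sum>W\<in>Pow S. if Q = W \<union> B then (-1) ^ card W * y (indicator Q) else 0)"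
    unfolding AC_cols_def sum_binvecs signed_cube_def sum_distrib_left
    by (rule sum.cong[OF refl], rule sum.cong[OF refl]) (simp add: indicator_inject)
  also have "\<dots> = (\<Sum>W\<in>Pow S. \<Sum>Q\<in>Pow {..<n}. if Q = W \<union> B then (-1) ^ card W * y (indicator Q) else 0)"
    by (rule sum.swap)
  also have "\<dots> = (\<Sum>W\<in>Pow S. (-1) ^ card W * y (indicator (W \<union> B)))"
    by (rule sum.cong[OF refl]) (use assms in auto)
  finally show ?thesis .
qed

lemma lin_span_finite:
  assumes "finite V"
  shows "lin_span V = range (\<lambda>c k. \<Sum>v\<in>V. c v * v k)"
proof
  show "range (\<lambda>c k. \<Sum>v\<in>V. c v * v k) \<subseteq> lin_span V"
    unfolding lin_span_def using assms by blast
  show "lin_span V \<subseteq> range (\<lambda>c k. \<Sum>v\<in>V. c v * v k)"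
  proof
    fix x assume "x \<in> lin_span V"
    then obtain W c where W: "finite W" "W \<subseteq> V" and x: "x = (\<lambda>k. \<Sum>v\<in>W. c v * v k)"
      unfolding lin_span_def by blast
    have "x = (\<lambda>c k. \<Sum>v\<in>V. c v * v k) (\<lambda>v. if v \<in> W then c v else 0)"
      unfolding x using W assms by (intro ext sum.mono_neutral_cong_left) auto
    then show "x \<in> range (\<lambda>c k. \<Sum>v\<in>V. c v * v k)"
      by (rule ssubst) (rule rangeI)
  qed
qed

lemma lin_span_base: "v \<in> V \<Longrightarrow> v \<in> lin_span V"
  unfolding lin_span_def by (intro CollectI exI[of _ "{v}"] exI[of _ "\<lambda>_. 1"]) auto

lemma lin_span_sum:
  assumes "finite V" "finite I" "\<And>i. i \<in> I \<Longrightarrow> f i \<in> lin_span V"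
  shows "(\<lambda>k. \<Sum>i\<in>I. a i * f i k) \<in> lin_span V"
proof -
  have "\<forall>i\<in>I. \<exists>c. f i = (\<lambda>k. \<Sum>v\<in>V. c v * v k)"
    using assms(3) unfolding lin_span_finite[OF assms(1)] by blast
  then obtain c where c: "\<And>i. i \<in> I \<Longrightarrow> f i = (\<lambda>k. \<Sum>v\<in>V. c i v * v k)"
    by metis
  have "(\<lambda>k. \<Sum>i\<in>I. a i * f i k) = (\<lambda>k. \<Sum>v\<in>V. (\<Sum>i\<in>I. a i * c i v) * v k)"
  proof
    fix k
    have "(\<Sum>i\<in>I. a i * f i k) = (\<Sum>i\<in>I. \<Sum>v\<in>V. a i * c i v * v k)"
      by (rule sum.cong[OF refl]) (simp add: c sum_distrib_left mult.assoc)
    also have "\<dots> = (\<Sum>v\<in>V. (\<Sum>i\<in>I. a i * c i v) * v k)"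
      by (subst sum.swap) (simp add: sum_distrib_right)
    finally show "(\<Sum>i\<in>I. a i * f i k) = (\<Sum>v\<in>V. (\<Sum>i\<in>I. a i * c i v) * v k)" .
  qed
  then show ?thesis
    unfolding lin_span_finite[OF assms(1)]
    using rangeI[of "\<lambda>c k. \<Sum>v\<in>V. c v * v k" "\<lambda>v. \<Sum>i\<in>I. a i * c i v"] by simp
qed

lemma nonface_contains_min_nonface:
  assumes "T \<subseteq> {..<n}" "T \<notin> C"
  obtains S where "S \<in> min_nonfaces n C" "S \<subseteq> T"
proof -
  define A where "A = {S. S \<subseteq> T \<and> S \<notin> C}"
  have "finite T"
    using assms(1) by (rule finite_subset) simp
  then have "finite A"
    unfolding A_def by (simp add: finite_subset[of _ "Pow T"] subset_eq)
  moreover have "T \<in> A"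
    unfolding A_def using assms(2) by simp
  ultimately obtain S where S: "S \<in> A" "S \<subseteq> T" and min: "\<forall>S'\<in>A. S' \<subseteq> S \<longrightarrow> S = S'"
    by (meson finite_has_minimal2)
  have "S \<in> min_nonfaces n C"
    unfolding min_nonfaces_def
  proof (intro CollectI conjI allI impI)
    show "S \<subseteq> {..<n}" "S \<notin> C"
      using S assms(1) unfolding A_def by auto
    show "S' \<in> C" if "S' \<subset> S" for S'
      using that S(2) min unfolding A_def by blast
  qed
  then show ?thesis
    using that S(2) by blast
qed

lemma finite_Kset: "finite (Kset n C)"
proof -
  have "col_idx n C \<subseteq> Pow {..<n} \<times> binvecs {..<n}"
    unfolding col_idx_def min_nonfaces_def binvecs_def by auto
  then show ?thesis
    unfolding Kset_def by (rule finite_imageI[OF finite_subset]) (simp add: binvecs_eq_indicator_image)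
qed

lemma col_idx_cases:
  assumes "p \<in> col_idx n C"
  obtains S B where "p = (S, indicator B)" "S \<in> min_nonfaces n C" "B \<subseteq> {..<n} - S"
proof -
  obtain S i where "p = (S, i)" "S \<in> min_nonfaces n C" "i \<in> indicator ` Pow ({..<n} - S)"
    using assms unfolding col_idx_def binvecs_eq_indicator_image by blast
  then show ?thesis
    using that by blast
qed

lemma signed_cube_nonface_in_lin_span:
  assumes "T \<subseteq> {..<n}" "T \<notin> C"
  shows "signed_cube T {} \<in> lin_span (Kset n C)"
proof -
  obtain S where S: "S \<in> min_nonfaces n C" "S \<subseteq> T"
    using assms by (rule nonface_contains_min_nonface)
  have fin: "finite S" "finite (T - S)"
    using S(2) assms(1) by (auto intro: finite_subset)
  have "signed_cube T {} = signed_cube (S \<union> (T - S)) {}"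
    using S(2) by (simp add: Un_absorb1)
  also have "\<dots> = (\<lambda>k. \<Sum>E\<in>Pow (T - S). (-1) ^ card E * Kvec (S, indicator E) k)"
  proof
    fix k
    have disj: "S \<inter> (T - S) = {}"
      by blast
    have "signed_cube (S \<union> (T - S)) {} k
        = (\<Sum>E\<in>Pow (T - S). (-1) ^ card E * signed_cube S (E \<union> {}) k)"
      by (rule signed_cube_Un[OF fin disj])
    also have "\<dots> = (\<Sum>E\<in>Pow (T - S). (-1) ^ card E * Kvec (S, indicator E) k)"
    proof (rule sum.cong[OF refl])
      fix E assume "E \<in> Pow (T - S)"
      then have "E \<inter> S = {}"
        by blast
      then show "(-1) ^ card E * signed_cube S (E \<union> {}) k = (-1) ^ card E * Kvec (S, indicator E) k"
        by (simp add: Kvec_eq_signed_cube[OF fin(1)])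
    qed
    finally show "signed_cube (S \<union> (T - S)) {} k
        = (\<Sum>E\<in>Pow (T - S). (-1) ^ card E * Kvec (S, indicator E) k)" .
  qed
  also have "\<dots> \<in> lin_span (Kset n C)"
  proof (rule lin_span_sum[OF finite_Kset])
    fix E assume "E \<in> Pow (T - S)"
    then have "indicator E \<in> binvecs ({..<n} - S)"
      using assms(1) unfolding binvecs_eq_indicator_image by blast
    then have "(S, indicator E) \<in> col_idx n C"
      using S(1) unfolding col_idx_def by blast
    then show "Kvec (S, indicator E) \<in> lin_span (Kset n C)"
      unfolding Kset_def by (intro lin_span_base imageI)
  qed (use fin in simp)
  finally show ?thesis .
qed

lemma AC_row_sum:
  "(\<Sum>k\<in>AC_cols n. AC (F, indicator R) k * x k) = (\<Sum>Q\<in>{Q \<in> Pow {..<n}. Q \<inter> F = R}. x (indicator Q))"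
proof -
  have "{Q \<in> Pow {..<n}. Q \<inter> F = R} = Pow {..<n} \<inter> {Q. Q \<inter> F = R}"
    by blast
  then show ?thesis
    unfolding AC_cols_def sum_binvecs AC_indicator by (simp add: sum.inter_filter)
qed

lemma lin_span_subset_AC_kernel:
  assumes "V \<subseteq> AC_kernel n C"
  shows "lin_span V \<subseteq> AC_kernel n C"
proof
  fix x assume "x \<in> lin_span V"
  then obtain W c where W: "finite W" "W \<subseteq> V" and x: "x = (\<lambda>k. \<Sum>v\<in>W. c v * v k)"
    unfolding lin_span_def by blast
  have "x k = 0" if "k \<notin> AC_cols n" for k
    unfolding x
  proof (intro sum.neutral ballI)
    fix v assume "v \<in> W"
    then have "v k = 0"
      using \<open>k \<notin> AC_cols n\<close> W assms unfolding AC_kernel_def by blast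
    then show "c v * v k = 0"
      by simp
  qed
  moreover have "(\<Sum>k\<in>AC_cols n. AC r k * x k) = 0" if "r \<in> AC_rows C" for r
  proof -
    have "(\<Sum>k\<in>AC_cols n. AC r k * v k) = 0" if "v \<in> W" for v
      using that \<open>r \<in> AC_rows C\<close> W assms unfolding AC_kernel_def by blast
    then have "(\<Sum>v\<in>W. c v * (\<Sum>k\<in>AC_cols n. AC r k * v k)) = 0"
      by (intro sum.neutral) simp
    moreover have "(\<Sum>k\<in>AC_cols n. AC r k * x k) = (\<Sum>v\<in>W. c v * (\<Sum>k\<in>AC_cols n. AC r k * v k))"
      unfolding x sum_distrib_left by (subst sum.swap) (simp add: mult.left_commute)
    ultimately show ?thesis
      by simp
  qed
  ultimately show "x \<in> AC_kernel n C"
    unfolding AC_kernel_def by blast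
qed

context
  fixes n :: nat and C :: "nat set set"
  assumes complex: "simplicial_complex n C"
begin

lemma face_subset_facet:
  assumes "T \<in> C"
  obtains F where "F \<in> facets C" "T \<subseteq> F"
proof -
  have "C \<subseteq> Pow {..<n}"
    using complex unfolding simplicial_complex_def by blast
  then have "finite C"
    by (rule finite_subset) simp
  then obtain F where F: "F \<in> C" "T \<subseteq> F" "\<forall>G\<in>C. F \<subseteq> G \<longrightarrow> F = G"
    using finite_has_maximal2[OF _ assms] by blast
  then have "F \<in> facets C"
    unfolding facets_def by blast
  then show ?thesis
    using that F(2) by blast
qed

lemma Kvec_in_AC_kernel:
  assumes "p \<in> col_idx n C"
  shows "Kvec p \<in> AC_kernel n C"
proof -
  obtain S B where p: "p = (S, indicator B)" and S: "S \<in> min_nonfaces n C" and B: "B \<subseteq> {..<n} - S"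
    using assms by (rule col_idx_cases)
  have SB: "finite S" "S \<union> B \<subseteq> {..<n}" "S \<notin> C"
    using S B unfolding min_nonfaces_def by (auto intro: finite_subset)
  have Kvec: "Kvec p = signed_cube S B"
    unfolding p using SB(1) B by (intro Kvec_eq_signed_cube) auto
  have "(\<Sum>k\<in>AC_cols n. AC (F, e) k * Kvec p k) = 0" if row: "(F, e) \<in> AC_rows C" for F e
  proof -
    obtain R where "e = indicator R" and F: "F \<in> facets C"
      using row unfolding AC_rows_def binvecs_eq_indicator_image by blast
    then have "\<not> S \<subseteq> F"
      using SB(3) complex unfolding facets_def simplicial_complex_def by blast
    then obtain a where "a \<in> S" "a \<notin> F"
      by blast
    have "(\<Sum>k\<in>AC_cols n. AC (F, e) k * Kvec p k)
        = (\<Sum>W\<in>Pow S. (-1) ^ card W * of_bool ((W \<union> B) \<inter> F = R))"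
      unfolding Kvec sum_AC_cols_signed_cube[OF SB(2)] \<open>e = indicator R\<close> AC_indicator ..
    also have "\<dots> = 0"
      using SB(1) \<open>a \<in> S\<close> \<open>a \<notin> F\<close> by (intro sum_Pow_alternating_eq_0) auto
    finally show ?thesis .
  qed
  moreover have "Kvec p k = 0" if "k \<notin> AC_cols n" for k
    using that SB(2) by (simp add: Kvec signed_cube_eq_0)
  ultimately show ?thesis
    unfolding AC_kernel_def by auto
qed

lemma superset_sum_face_eq_0:
  assumes x: "x \<in> AC_kernel n C" and "T \<in> C"
  shows "(\<Sum>Q\<in>Pow {..<n}. if T \<subseteq> Q then x (indicator Q) else 0) = 0"
proof -
  obtain F where F: "F \<in> facets C" "T \<subseteq> F"
    using \<open>T \<in> C\<close> by (rule face_subset_facet)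
  have "F \<subseteq> {..<n}"
    using F(1) complex unfolding facets_def simplicial_complex_def by blast
  then have "finite F"
    by (rule finite_subset) simp
  have row_eq_0: "(\<Sum>Q\<in>{Q \<in> Pow {..<n}. Q \<inter> F = R}. x (indicator Q)) = 0" if "R \<subseteq> F" for R
  proof -
    have "(F, indicator R) \<in> AC_rows C"
      using F(1) that unfolding AC_rows_def binvecs_eq_indicator_image by blast
    then have "(\<Sum>k\<in>AC_cols n. AC (F, indicator R) k * x k) = 0"
      using x unfolding AC_kernel_def by blast
    then show ?thesis
      by (simp only: AC_row_sum)
  qed
  txt \<open>The supersets of \<open>T\<close> are grouped by their trace on \<open>F\<close>; each group is a row of \<open>A_C\<close>.\<close>
  have fibre: "{Q \<in> {Q \<in> Pow {..<n}. T \<subseteq> Q}. Q \<inter> F = R}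
      = (if T \<subseteq> R then {Q \<in> Pow {..<n}. Q \<inter> F = R} else {})" for R
    using F(2) by auto
  have "(\<Sum>Q\<in>Pow {..<n}. if T \<subseteq> Q then x (indicator Q) else 0)
      = (\<Sum>Q\<in>{Q \<in> Pow {..<n}. T \<subseteq> Q}. x (indicator Q))"
    by (rule sum.inter_filter[symmetric]) simp
  also have "\<dots> = (\<Sum>R\<in>Pow F. \<Sum>Q\<in>{Q \<in> {Q \<in> Pow {..<n}. T \<subseteq> Q}. Q \<inter> F = R}. x (indicator Q))"
    using \<open>finite F\<close> by (intro sum.group[symmetric]) auto
  also have "\<dots> = 0"
  proof (rule sum.neutral, rule ballI)
    fix R assume "R \<in> Pow F"
    then show "(\<Sum>Q\<in>{Q \<in> {Q \<in> Pow {..<n}. T \<subseteq> Q}. Q \<inter> F = R}. x (indicator Q)) = 0"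
      unfolding fibre using row_eq_0 by simp
  qed
  finally show ?thesis .
qed

lemma AC_kernel_expansion:
  assumes x: "x \<in> AC_kernel n C"
  shows "x = (\<lambda>k. \<Sum>T\<in>{T. T \<subseteq> {..<n} \<and> T \<notin> C}.
    (-1) ^ card T * (\<Sum>Q\<in>Pow {..<n}. if T \<subseteq> Q then x (indicator Q) else 0) * signed_cube T {} k)"
    (is "x = (\<lambda>k. \<Sum>T\<in>_. ?c T * signed_cube T {} k)")
proof
  fix k
  have "(\<Sum>T\<in>{T. T \<subseteq> {..<n} \<and> T \<notin> C}. ?c T * signed_cube T {} k)
      = (\<Sum>T\<in>Pow {..<n}. ?c T * signed_cube T {} k)"
    by (rule sum.mono_neutral_left) (auto simp: superset_sum_face_eq_0[OF x])
  also have "\<dots> = x k"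
  proof (cases "k \<in> AC_cols n")
    case False
    then have "x k = 0"
      using x unfolding AC_kernel_def by blast
    moreover have "signed_cube T {} k = 0" if "T \<in> Pow {..<n}" for T
      using that False by (intro signed_cube_eq_0) auto
    ultimately show ?thesis
      by simp
  next
    case True
    then obtain P where P: "k = indicator P" "P \<subseteq> {..<n}"
      unfolding AC_cols_def binvecs_eq_indicator_image by blast
    have "signed_cube T {} k = (if P \<subseteq> T then (-1) ^ card P else 0)" if "T \<in> Pow {..<n}" for T
      using that P(1) finite_subset[of T "{..<n}"] by (simp add: signed_cube_indicator)
    then have "(\<Sum>T\<in>Pow {..<n}. ?c T * signed_cube T {} k)
        = (\<Sum>T\<in>Pow {..<n}. ?c T * (if P \<subseteq> T then (-1) ^ card P else 0))"
      by simp
    also have "\<dots> = x k"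
      unfolding P(1) by (rule superset_sum_inversion) (simp_all add: P(2))
    finally show ?thesis .
  qed
  finally show "x k = (\<Sum>T\<in>{T. T \<subseteq> {..<n} \<and> T \<notin> C}. ?c T * signed_cube T {} k)"
    by simp
qed

lemma AC_kernel_subset_lin_span: "AC_kernel n C \<subseteq> lin_span (Kset n C)"
proof
  fix x assume x: "x \<in> AC_kernel n C"
  have "finite {T. T \<subseteq> {..<n} \<and> T \<notin> C}"
    by simp
  then have "(\<lambda>k. \<Sum>T\<in>{T. T \<subseteq> {..<n} \<and> T \<notin> C}.
      (-1) ^ card T * (\<Sum>Q\<in>Pow {..<n}. if T \<subseteq> Q then x (indicator Q) else 0) * signed_cube T {} k)
      \<in> lin_span (Kset n C)"
    by (rule lin_span_sum[OF finite_Kset]) (auto intro: signed_cube_nonface_in_lin_span)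
  then show "x \<in> lin_span (Kset n C)"
    using AC_kernel_expansion[OF x] by simp
qed

lemma lin_span_Kset_eq_AC_kernel: "lin_span (Kset n C) = AC_kernel n C"
proof
  show "lin_span (Kset n C) \<subseteq> AC_kernel n C"
    using Kvec_in_AC_kernel unfolding Kset_def by (intro lin_span_subset_AC_kernel) blast
  show "AC_kernel n C \<subseteq> lin_span (Kset n C)"
    by (rule AC_kernel_subset_lin_span)
qed

end

lemma Kvec_sign_change:
  assumes "k \<in> AC_cols n" "p \<in> col_idx n C"
  shows "(-1) ^ (\<Sum>t<n. k t) * (-1) ^ (\<Sum>t<n. snd p t) * Kvec p k = Mvec p k"
proof -
  obtain S i where p: "p = (S, i)" and S: "S \<subseteq> {..<n}" and i: "i \<in> binvecs ({..<n} - S)"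
    using assms(2) unfolding col_idx_def min_nonfaces_def by blast
  have "(\<Sum>t<n. i t) = (\<Sum>t\<in>{..<n} - S. i t) + (\<Sum>t\<in>S. i t)"
    using S by (simp add: sum.subset_diff)
  also have "(\<Sum>t\<in>S. i t) = 0"
    using i unfolding binvecs_def by simp
  finally have sum_i: "(\<Sum>t<n. i t) = (\<Sum>t\<in>{..<n} - S. i t)"
    by simp
  have sum_glue: "(\<Sum>t<n. glue S i j t) = norm1 S j + (\<Sum>t\<in>{..<n} - S. i t)" for j
  proof -
    have "(\<Sum>t<n. glue S i j t) = (\<Sum>t\<in>{..<n} - S. glue S i j t) + (\<Sum>t\<in>S. glue S i j t)"
      using S by (simp add: sum.subset_diff)
    then show ?thesis
      unfolding norm1_def glue_def by simp
  qed
  have sign: "(-1) ^ (\<Sum>t<n. k t) * (-1) ^ (\<Sum>t<n. i t) * ((-1) ^ norm1 S j * unitvec S i j k)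
      = unitvec S i j k" for j
  proof (cases "k = glue S i j")
    case True
    then have "(\<Sum>t<n. k t) + (\<Sum>t<n. i t) + norm1 S j = 2 * (norm1 S j + (\<Sum>t\<in>{..<n} - S. i t))"
      by (simp add: sum_glue sum_i)
    then have "(-1::real) ^ (\<Sum>t<n. k t) * (-1) ^ (\<Sum>t<n. i t) * (-1) ^ norm1 S j = 1"
      by (metis power_add neg_one_even_power even_mult_iff even_numeral)
    then show ?thesis
      by (simp add: mult.assoc)
  qed (simp add: unitvec_def)
  show ?thesis
    unfolding p Kvec_def Mvec_def fst_conv snd_conv sum_distrib_left
    by (rule sum.cong[OF refl]) (rule sign)
qed

theorem proposition3p6:
  fixes n :: nat and C :: "nat set set"
  assumes "simplicial_complex n C"
  shows "lin_span (Kset n C) = AC_kernel n C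
    \<and> (\<exists>\<rho> \<gamma>. (\<forall>k. \<rho> k \<in> {-1, 1::real}) \<and> (\<forall>p. \<gamma> p \<in> {-1, 1::real}) \<and>
          (\<forall>k\<in>AC_cols n. \<forall>p\<in>col_idx n C. \<rho> k * \<gamma> p * Kvec p k = Mvec p k))"
proof
  show "lin_span (Kset n C) = AC_kernel n C"
    using assms by (rule lin_span_Kset_eq_AC_kernel)
  have sign: "(-1::real) ^ m \<in> {-1, 1}" for m
    by (simp add: minus_one_power_iff)
  show "\<exists>\<rho> \<gamma>. (\<forall>k. \<rho> k \<in> {-1, 1::real}) \<and> (\<forall>p. \<gamma> p \<in> {-1, 1::real}) \<and>
      (\<forall>k\<in>AC_cols n. \<forall>p\<in>col_idx n C. \<rho> k * \<gamma> p * Kvec p k = Mvec p k)"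
    using sign Kvec_sign_change
    by (intro exI[of _ "\<lambda>k. (-1) ^ (\<Sum>t<n. k t)"] exI[of _ "\<lambda>p. (-1) ^ (\<Sum>t<n. snd p t)"]) blast
qed

end
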